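(* Let $G$ be a finite group and $T$ a $G$-transfer system. Two subgroups are in the same connected component of $T$ if and only if they are in the same connected component of $\mathrm{Hull}(T)$. Moreover, if $K\le H$ and $K$ and $H$ lie in the same connected component of $T$, then $\mathrm{Hull}(T)$ contains the edge $K\to H$.
   Context: A $G$-transfer system is a partial order $\to$ on the set of subgroups of $G$ such that: $K\to H$ implies $K\le H$; $H\to H$ for all $H$; $L\to K$ and $K\to H$ imply $L\to H$; $K\to H$ implies $K\cap L\to H\cap L$ for every $L\le G$; $K\to H$ implies $gKg^{-1}\to gHg^{-1}$ for all $g\in G$. We view $T$ as a directed graph on the subgroups of $G$; two subgroups are in the same connected component if joined by a path in the underlying undirected graph. A $G$-transfer system is saturated if whenever $L\le K\le H$ and $L\to H$ is in it, then $K\to H$ is in it. The saturated hull $\mathrm{Hull}(T)$ is the smallest saturated $G$-transfer system containing $T$. *)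

theory Defs
  imports "HOL-Algebra.Group"
begin

definition conj_sub :: "('a, 'b) monoid_scheme \<Rightarrow> 'a \<Rightarrow> 'a set \<Rightarrow> 'a set" where
  "conj_sub G g K = (\<lambda>k. g \<otimes>\<^bsub>G\<^esub> k \<otimes>\<^bsub>G\<^esub> inv\<^bsub>G\<^esub> g) ` K"

definition transfer_system :: "('a, 'b) monoid_scheme \<Rightarrow> ('a set \<times> 'a set) set \<Rightarrow> bool" where
  "transfer_system G T \<longleftrightarrow>
     (\<forall>K H. (K, H) \<in> T \<longrightarrow> subgroup K G \<and> subgroup H G \<and> K \<subseteq> H) \<and>
     (\<forall>H. subgroup H G \<longrightarrow> (H, H) \<in> T) \<and>
     (\<forall>L K H. (L, K) \<in> T \<longrightarrow> (K, H) \<in> T \<longrightarrow> (L, H) \<in> T) \<and>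
     (\<forall>K H L. (K, H) \<in> T \<longrightarrow> subgroup L G \<longrightarrow> (K \<inter> L, H \<inter> L) \<in> T) \<and>
     (\<forall>K H g. (K, H) \<in> T \<longrightarrow> g \<in> carrier G \<longrightarrow> (conj_sub G g K, conj_sub G g H) \<in> T)"

definition saturated :: "('a, 'b) monoid_scheme \<Rightarrow> ('a set \<times> 'a set) set \<Rightarrow> bool" where
  "saturated G T \<longleftrightarrow> transfer_system G T \<and>
     (\<forall>L K H. subgroup L G \<longrightarrow> subgroup K G \<longrightarrow> subgroup H G \<longrightarrow>
        L \<subseteq> K \<longrightarrow> K \<subseteq> H \<longrightarrow> (L, H) \<in> T \<longrightarrow> (K, H) \<in> T)"

definition Hull :: "('a, 'b) monoid_scheme \<Rightarrow> ('a set \<times> 'a set) set \<Rightarrow> ('a set \<times> 'a set) set" where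
  "Hull G T = \<Inter> {S. saturated G S \<and> T \<subseteq> S}"

definition same_component :: "('a set \<times> 'a set) set \<Rightarrow> 'a set \<Rightarrow> 'a set \<Rightarrow> bool" where
  "same_component T K H \<longleftrightarrow> (K, H) \<in> (T \<union> T\<inverse>)\<^sup>*"

end

theory Submission
  imports Defs
begin

text \<open>The pairs K \<le> H lying in a common component of T form a saturated transfer system
  containing T, so Hull T has the same components as T. Conversely, in a saturated system S a
  path from X to Y in the underlying graph can be followed step by step while keeping track of
  the edges X \<inter> Y \<rightarrow> X and X \<inter> Y \<rightarrow> Y; for K \<le> H the second one is K \<rightarrow> H.\<close>

lemma transfer_system_edgeD:
  assumes "transfer_system G T" "(K, H) \<in> T"
  shows "subgroup K G" "subgroup H G" "K \<subseteq> H"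
  using assms unfolding transfer_system_def by auto

lemma transfer_system_refl:
  "transfer_system G T \<Longrightarrow> subgroup H G \<Longrightarrow> (H, H) \<in> T"
  unfolding transfer_system_def by auto

lemma transfer_system_trans:
  "transfer_system G T \<Longrightarrow> (L, K) \<in> T \<Longrightarrow> (K, H) \<in> T \<Longrightarrow> (L, H) \<in> T"
  unfolding transfer_system_def by auto

lemma transfer_system_restrict:
  "transfer_system G T \<Longrightarrow> (K, H) \<in> T \<Longrightarrow> subgroup L G \<Longrightarrow> (K \<inter> L, H \<inter> L) \<in> T"
  unfolding transfer_system_def by auto

lemma transfer_system_conj:
  "transfer_system G T \<Longrightarrow> (K, H) \<in> T \<Longrightarrow> g \<in> carrier G \<Longrightarrow>
    (conj_sub G g K, conj_sub G g H) \<in> T"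
  unfolding transfer_system_def by auto

lemma transfer_system_subgroup_Int:
  assumes "transfer_system G T" "subgroup K G" "subgroup L G"
  shows "subgroup (K \<inter> L) G"
  using assms by (meson transfer_system_edgeD transfer_system_refl transfer_system_restrict)

lemma transfer_system_subgroup_conj:
  assumes "transfer_system G T" "subgroup K G" "g \<in> carrier G"
  shows "subgroup (conj_sub G g K) G"
  using assms by (meson transfer_system_edgeD transfer_system_refl transfer_system_conj)

lemma saturatedI:
  assumes "\<And>K H. (K, H) \<in> S \<Longrightarrow> subgroup K G \<and> subgroup H G \<and> K \<subseteq> H"
    and "\<And>H. subgroup H G \<Longrightarrow> (H, H) \<in> S"
    and "\<And>L K H. (L, K) \<in> S \<Longrightarrow> (K, H) \<in> S \<Longrightarrow> (L, H) \<in> S"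
    and "\<And>K H L. (K, H) \<in> S \<Longrightarrow> subgroup L G \<Longrightarrow> (K \<inter> L, H \<inter> L) \<in> S"
    and "\<And>K H g. (K, H) \<in> S \<Longrightarrow> g \<in> carrier G \<Longrightarrow> (conj_sub G g K, conj_sub G g H) \<in> S"
    and "\<And>L K H. subgroup L G \<Longrightarrow> subgroup K G \<Longrightarrow> subgroup H G \<Longrightarrow>
          L \<subseteq> K \<Longrightarrow> K \<subseteq> H \<Longrightarrow> (L, H) \<in> S \<Longrightarrow> (K, H) \<in> S"
  shows "saturated G S"
  unfolding saturated_def transfer_system_def using assms by blast

lemma saturated_transfer_system: "saturated G S \<Longrightarrow> transfer_system G S"
  unfolding saturated_def by blast

lemma saturated_upward:
  "saturated G S \<Longrightarrow> subgroup L G \<Longrightarrow> subgroup K G \<Longrightarrow> L \<subseteq> K \<Longrightarrow> K \<subseteq> H \<Longrightarrow>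
    (L, H) \<in> S \<Longrightarrow> (K, H) \<in> S"
  unfolding saturated_def by (meson transfer_system_edgeD)

lemma saturated_Inter:
  assumes "\<F> \<noteq> {}" and sat: "\<And>S. S \<in> \<F> \<Longrightarrow> saturated G S"
  shows "saturated G (\<Inter>\<F>)"
proof -
  have ts: "\<And>S. S \<in> \<F> \<Longrightarrow> transfer_system G S"
    using sat by (rule saturated_transfer_system)
  show ?thesis
  proof (rule saturatedI)
    fix K H assume "(K, H) \<in> \<Inter>\<F>"
    moreover obtain S where "S \<in> \<F>" using \<open>\<F> \<noteq> {}\<close> by blast
    ultimately show "subgroup K G \<and> subgroup H G \<and> K \<subseteq> H"
      using transfer_system_edgeD ts by blast
  qed (auto intro: transfer_system_refl transfer_system_trans transfer_system_restrict
         transfer_system_conj saturated_upward ts sat)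
qed

lemma same_component_refl: "same_component T K K"
  unfolding same_component_def by blast

lemma same_component_sym: "same_component T K H \<Longrightarrow> same_component T H K"
  unfolding same_component_def
  by (metis converse_Un converse_converse rtrancl_converseI sup_commute)

lemma same_component_trans:
  "same_component T L K \<Longrightarrow> same_component T K H \<Longrightarrow> same_component T L H"
  unfolding same_component_def by (rule rtrancl_trans)

lemma same_component_edge: "(K, H) \<in> T \<Longrightarrow> same_component T K H"
  unfolding same_component_def by blast

lemma same_component_mono: "T \<subseteq> S \<Longrightarrow> same_component T K H \<Longrightarrow> same_component S K H"
  unfolding same_component_def by (meson Un_mono converse_mono rtrancl_mono subsetD)

lemma same_component_image:
  assumes "\<And>K H. (K, H) \<in> T \<Longrightarrow> (f K, f H) \<in> T" and "same_component T K H"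
  shows "same_component T (f K) (f H)"
  using assms(2) unfolding same_component_def
proof (induction rule: rtrancl_induct)
  case (step H H')
  then have "(f H, f H') \<in> T \<union> T\<inverse>" using assms(1) by blast
  with step.IH show ?case by (rule rtrancl_into_rtrancl)
qed simp

lemma same_component_of_edges:
  assumes "\<And>K H. (K, H) \<in> S \<Longrightarrow> same_component T K H" and "same_component S K H"
  shows "same_component T K H"
proof -
  have "S \<union> S\<inverse> \<subseteq> (T \<union> T\<inverse>)\<^sup>*"
  proof (rule subrelI)
    fix K H assume "(K, H) \<in> S \<union> S\<inverse>"
    then have "same_component T K H" using assms(1) same_component_sym by blast
    then show "(K, H) \<in> (T \<union> T\<inverse>)\<^sup>*" unfolding same_component_def .
  qed
  with assms(2) show ?thesis
    unfolding same_component_def by (rule rtrancl_subset_rtrancl[THEN subsetD, rotated])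
qed

definition component_order :: "('a, 'b) monoid_scheme \<Rightarrow> ('a set \<times> 'a set) set \<Rightarrow> ('a set \<times> 'a set) set"
  where "component_order G T =
    {(K, H). subgroup K G \<and> subgroup H G \<and> K \<subseteq> H \<and> same_component T K H}"

lemma subset_component_order: "transfer_system G T \<Longrightarrow> T \<subseteq> component_order G T"
  unfolding component_order_def by (auto intro: same_component_edge dest: transfer_system_edgeD)

lemma saturated_component_order:
  assumes ts: "transfer_system G T"
  shows "saturated G (component_order G T)"
proof (rule saturatedI)
  fix K H L assume KH: "(K, H) \<in> component_order G T" and L: "subgroup L G"
  have "same_component T (K \<inter> L) (H \<inter> L)"
    using KH L ts by (intro same_component_image[where f = "\<lambda>X. X \<inter> L"])
      (auto simp: component_order_def intro: transfer_system_restrict)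
  with KH L ts show "(K \<inter> L, H \<inter> L) \<in> component_order G T"
    by (auto simp: component_order_def intro: transfer_system_subgroup_Int)
next
  fix K H g assume KH: "(K, H) \<in> component_order G T" and g: "g \<in> carrier G"
  have "same_component T (conj_sub G g K) (conj_sub G g H)"
    using KH g ts by (intro same_component_image[where f = "conj_sub G g"])
      (auto simp: component_order_def intro: transfer_system_conj)
  moreover have "conj_sub G g K \<subseteq> conj_sub G g H"
    using KH unfolding component_order_def conj_sub_def by auto
  ultimately show "(conj_sub G g K, conj_sub G g H) \<in> component_order G T"
    using KH g ts by (auto simp: component_order_def intro: transfer_system_subgroup_conj)
next
  fix L K H
  assume "subgroup L G" "subgroup K G" "subgroup H G" "L \<subseteq> K" "K \<subseteq> H"
    and LH: "(L, H) \<in> component_order G T"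
  \<comment> \<open>restricting the path from L to H to K gives a path from L to K\<close>
  have "same_component T (L \<inter> K) (H \<inter> K)"
    using LH \<open>subgroup K G\<close> ts by (intro same_component_image[where f = "\<lambda>X. X \<inter> K"])
      (auto simp: component_order_def intro: transfer_system_restrict)
  with \<open>L \<subseteq> K\<close> \<open>K \<subseteq> H\<close> have "same_component T L K"
    by (simp add: Int_absorb2 Int_absorb1)
  with LH have "same_component T K H"
    unfolding component_order_def by (blast intro: same_component_sym same_component_trans)
  with \<open>subgroup K G\<close> \<open>subgroup H G\<close> \<open>K \<subseteq> H\<close> show "(K, H) \<in> component_order G T"
    unfolding component_order_def by blast
qed (auto simp: component_order_def intro: same_component_refl same_component_trans)

lemma subset_Hull: "T \<subseteq> Hull G T"
  unfolding Hull_def by blast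

lemma Hull_least: "saturated G S \<Longrightarrow> T \<subseteq> S \<Longrightarrow> Hull G T \<subseteq> S"
  unfolding Hull_def by blast

lemma Hull_saturated:
  assumes "transfer_system G T"
  shows "saturated G (Hull G T)"
  unfolding Hull_def using assms saturated_component_order subset_component_order
  by (intro saturated_Inter) blast+

lemma same_component_Hull_iff:
  assumes "transfer_system G T"
  shows "same_component (Hull G T) K H \<longleftrightarrow> same_component T K H"
proof
  have "Hull G T \<subseteq> component_order G T"
    using assms by (intro Hull_least saturated_component_order subset_component_order)
  then have "\<And>K H. (K, H) \<in> Hull G T \<Longrightarrow> same_component T K H"
    unfolding component_order_def by blast
  moreover assume "same_component (Hull G T) K H"
  ultimately show "same_component T K H" by (rule same_component_of_edges)
qed (rule same_component_mono[OF subset_Hull])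

lemma transfer_system_meet_step_down:
  assumes ts: "transfer_system G S" and X: "subgroup X G"
    and XY_X: "(X \<inter> Y, X) \<in> S" and XY_Y: "(X \<inter> Y, Y) \<in> S" and ZY: "(Z, Y) \<in> S"
  shows "(X \<inter> Z, X) \<in> S \<and> (X \<inter> Z, Z) \<in> S"
proof -
  have Z: "subgroup Z G" and "Z \<subseteq> Y" using transfer_system_edgeD[OF ts ZY] by auto
  have "(X \<inter> Y \<inter> Z, Y \<inter> Z) \<in> S" using transfer_system_restrict[OF ts XY_Y Z] .
  moreover have "X \<inter> Y \<inter> Z = X \<inter> Z" "Y \<inter> Z = Z" using \<open>Z \<subseteq> Y\<close> by auto
  ultimately have "(X \<inter> Z, Z) \<in> S" by simp
  moreover have "(X \<inter> Z, X \<inter> Y) \<in> S"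
    using transfer_system_restrict[OF ts ZY X] by (simp add: Int_commute)
  then have "(X \<inter> Z, X) \<in> S" using transfer_system_trans[OF ts _ XY_X] by blast
  ultimately show ?thesis by blast
qed

lemma saturated_meet_step_up:
  assumes sat: "saturated G S" and X: "subgroup X G"
    and XY_X: "(X \<inter> Y, X) \<in> S" and XY_Y: "(X \<inter> Y, Y) \<in> S" and YZ: "(Y, Z) \<in> S"
  shows "(X \<inter> Z, X) \<in> S \<and> (X \<inter> Z, Z) \<in> S"
proof -
  have ts: "transfer_system G S" using sat by (rule saturated_transfer_system)
  have Y: "subgroup Y G" and Z: "subgroup Z G" and "Y \<subseteq> Z"
    using transfer_system_edgeD[OF ts YZ] by auto
  have XY: "subgroup (X \<inter> Y) G" and XZ: "subgroup (X \<inter> Z) G"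
    using transfer_system_subgroup_Int[OF ts X] Y Z by auto
  have "X \<inter> Y \<subseteq> X \<inter> Z" using \<open>Y \<subseteq> Z\<close> by blast
  moreover have "(X \<inter> Y, Z) \<in> S" using transfer_system_trans[OF ts XY_Y YZ] .
  ultimately show ?thesis
    using saturated_upward[OF sat XY XZ] XY_X by blast
qed

lemma saturated_meet_edges:
  assumes sat: "saturated G S" and X: "subgroup X G" and "same_component S X Y"
  shows "(X \<inter> Y, X) \<in> S \<and> (X \<inter> Y, Y) \<in> S"
  using assms(3) unfolding same_component_def
proof (induction rule: rtrancl_induct)
  case base
  show ?case using transfer_system_refl[OF saturated_transfer_system[OF sat] X] by simp
next
  case (step Y Z)
  from \<open>(Y, Z) \<in> S \<union> S\<inverse>\<close> show ?case
  proof
    assume "(Y, Z) \<in> S"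
    with step.IH show ?thesis using saturated_meet_step_up[OF sat X] by blast
  next
    assume "(Y, Z) \<in> S\<inverse>"
    with step.IH show ?thesis
      using transfer_system_meet_step_down[OF saturated_transfer_system[OF sat] X] by blast
  qed
qed

lemma saturated_component_edge:
  assumes "saturated G S" "subgroup K G" "K \<subseteq> H" "same_component S K H"
  shows "(K, H) \<in> S"
  using saturated_meet_edges[OF assms(1,2,4)] \<open>K \<subseteq> H\<close> by (simp add: Int_absorb2)

theorem mainTheorem2:
  fixes G :: "('a, 'b) monoid_scheme" and T :: "('a set \<times> 'a set) set"
  assumes "group G" and "finite (carrier G)" and "transfer_system G T"
  shows "(\<forall>K H. subgroup K G \<longrightarrow> subgroup H G \<longrightarrow>
            (same_component T K H \<longleftrightarrow> same_component (Hull G T) K H)) \<and>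
         (\<forall>K H. subgroup K G \<longrightarrow> subgroup H G \<longrightarrow> K \<subseteq> H \<longrightarrow>
            same_component T K H \<longrightarrow> (K, H) \<in> Hull G T)"
  using same_component_Hull_iff[OF assms(3)]
    saturated_component_edge[OF Hull_saturated[OF assms(3)]]
  by blast

end
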